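(* Let $\mathcal{F}$ be a frame, let $C_{cut}$ be an undirected cut between $C_s$ and $C_o$ (all subsets of $\mathcal{CH}$), and let $\mathcal{B}_o\in\mathrm{lruns}_{C_o}$. Then $$J_{C_o}^{C_s}(\mathcal{B}_o)=\bigcup_{\mathcal{B}_c\in J_{C_o}^{C_{cut}}(\mathcal{B}_o)} J_{C_{cut}}^{C_s}(\mathcal{B}_c).$$
   Context: A frame $\mathcal{F}$ consists of pairwise disjoint sets $\mathcal{LO}$ (locations), $\mathcal{CH}$ (channels), $\mathcal{D}$ (data). Each channel $c$ either has both a sender $\mathrm{sender}(c)$ and recipient $\mathrm{recipient}(c)$ in $\mathcal{LO}$ (possibly equal), or neither; $\mathrm{chans}(\ell)=\{c:\mathrm{sender}(c)=\ell\text{ or }\mathrm{recipient}(c)=\ell\}$. Each location $\ell$ has a prefix-closed set $\mathrm{traces}(\ell)$ of finite or infinite sequences of labels $(c,v)$, $c\in\mathrm{chans}(\ell)$, $v\in\mathcal{D}$. Events come from a set $E$ with $\mathrm{chan}:E\to\mathcal{CH}$, $\mathrm{msg}:E\to\mathcal{D}$. A system of events $(B,\preceq)$ has $B\subseteq E$, $\preceq$ a partial order with finitely many predecessors per event; it is an execution ($\in\mathrm{exec}(\mathcal{F})$) iff for each location $\ell$ the events whose channel has $\ell$ as sender or recipient are linearly ordered and, as a sequence of labels $(\mathrm{chan}(e),\mathrm{msg}(e))$, lie in $\mathrm{traces}(\ell)$. $\mathcal{B}|_C$ keeps events with channel in $C$ with the restricted order; $\mathrm{lruns}_C=\{\mathcal{A}|_C:\mathcal{A}\in\mathrm{exec}(\mathcal{F})\}$;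 $J_C^{C'}(\mathcal{B})=\{\mathcal{A}|_{C'}:\mathcal{A}\in\mathrm{exec}(\mathcal{F}),\mathcal{A}|_C=\mathcal{B}\}$. An undirected path is a sequence of locations $\ell_0,\dots,\ell_n$ with channels $c_1,\dots,c_n$, each $c_k$ having endpoints $\ell_{k-1},\ell_k$ in some direction (the path traverses the $c_k$). $C_{cut}$ is an undirected cut between $C_s$ and $C_o$ iff $C_s,C_{cut},C_o$ are pairwise disjoint and every undirected path from an endpoint location of a channel in $C_o$ to an endpoint location of a channel in $C_s$ traverses some channel in $C_{cut}$. *)

theory Defs
  imports Main
begin

text \<open>Locations, channels and data are the (automatically pairwise
disjoint) types 'l, 'c, 'd.  A channel either has a sender and a recipient
(ends c = Some (sender, recipient)) or neither (ends c = None).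
Finite or infinite sequences of labels are represented canonically as
functions nat \<Rightarrow> 'a option whose domain is downward closed.\<close>

type_synonym 'a fiseq = "nat \<Rightarrow> 'a option"

definition valid_seq :: "'a fiseq \<Rightarrow> bool" where
  "valid_seq s \<longleftrightarrow> (\<forall>i. s (Suc i) \<noteq> None \<longrightarrow> s i \<noteq> None)"

definition seq_prefix :: "'a fiseq \<Rightarrow> 'a fiseq \<Rightarrow> bool" where
  "seq_prefix t s \<longleftrightarrow> valid_seq t \<and> (\<forall>i. t i \<noteq> None \<longrightarrow> t i = s i)"

definition chans :: "('c \<Rightarrow> ('l \<times> 'l) option) \<Rightarrow> 'l \<Rightarrow> 'c set" where
  "chans ends l = {c. \<exists>s r. ends c = Some (s, r) \<and> (s = l \<or> r = l)}"

definition frame :: "('c \<Rightarrow> ('l \<times> 'l) option) \<Rightarrow> ('l \<Rightarrow> ('c \<times> 'd) fiseq set) \<Rightarrow> bool" where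
  "frame ends traces \<longleftrightarrow>
     (\<forall>l. \<forall>s\<in>traces l. valid_seq s
        \<and> (\<forall>i c v. s i = Some (c, v) \<longrightarrow> c \<in> chans ends l)
        \<and> (\<forall>t. seq_prefix t s \<longrightarrow> t \<in> traces l))"

type_synonym 'e soe = "'e set \<times> ('e \<times> 'e) set"

definition system_of_events :: "'e soe \<Rightarrow> bool" where
  "system_of_events BR \<longleftrightarrow> (case BR of (B, R) \<Rightarrow>
     R \<subseteq> B \<times> B \<and> refl_on B R \<and> antisym R \<and> trans R
     \<and> (\<forall>e\<in>B. finite {e'. (e', e) \<in> R}))"

text \<open>The sequence of labels of a linearly ordered set S of events (every event
having finitely many predecessors): position i holds the label of the event
with exactly i strict predecessors in S.\<close>

definition label_seq ::
  "('e \<Rightarrow> 'c) \<Rightarrow> ('e \<Rightarrow> 'd) \<Rightarrow> ('e \<times> 'e) set \<Rightarrow> 'e set \<Rightarrow> ('c \<times> 'd) fiseq" where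
  "label_seq chan msg R S i =
     (if \<exists>e\<in>S. card {e'\<in>S. (e', e) \<in> R \<and> e' \<noteq> e} = i
      then Some (let e = (SOME e. e \<in> S \<and> card {e'\<in>S. (e', e) \<in> R \<and> e' \<noteq> e} = i)
                 in (chan e, msg e))
      else None)"

definition exec ::
  "('c \<Rightarrow> ('l \<times> 'l) option) \<Rightarrow> ('l \<Rightarrow> ('c \<times> 'd) fiseq set) \<Rightarrow> ('e \<Rightarrow> 'c) \<Rightarrow> ('e \<Rightarrow> 'd) \<Rightarrow> 'e soe set" where
  "exec ends traces chan msg = {(B, R). system_of_events (B, R) \<and>
     (\<forall>l. let S = {e\<in>B. chan e \<in> chans ends l} in
        (\<forall>e\<in>S. \<forall>e'\<in>S. (e, e') \<in> R \<or> (e', e) \<in> R)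
        \<and> label_seq chan msg R S \<in> traces l)}"

definition restr :: "('e \<Rightarrow> 'c) \<Rightarrow> 'c set \<Rightarrow> 'e soe \<Rightarrow> 'e soe" where
  "restr chan C BR = (case BR of (B, R) \<Rightarrow>
     (let B' = {e\<in>B. chan e \<in> C} in (B', R \<inter> (B' \<times> B'))))"

definition lruns ::
  "('c \<Rightarrow> ('l \<times> 'l) option) \<Rightarrow> ('l \<Rightarrow> ('c \<times> 'd) fiseq set) \<Rightarrow> ('e \<Rightarrow> 'c) \<Rightarrow> ('e \<Rightarrow> 'd) \<Rightarrow> 'c set \<Rightarrow> 'e soe set" where
  "lruns ends traces chan msg C = {restr chan C A | A. A \<in> exec ends traces chan msg}"

definition J ::
  "('c \<Rightarrow> ('l \<times> 'l) option) \<Rightarrow> ('l \<Rightarrow> ('c \<times> 'd) fiseq set) \<Rightarrow> ('e \<Rightarrow> 'c) \<Rightarrow> ('e \<Rightarrow> 'd)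
   \<Rightarrow> 'c set \<Rightarrow> 'c set \<Rightarrow> 'e soe \<Rightarrow> 'e soe set" where
  "J ends traces chan msg C C' B =
     {restr chan C' A | A. A \<in> exec ends traces chan msg \<and> restr chan C A = B}"

definition upath :: "('c \<Rightarrow> ('l \<times> 'l) option) \<Rightarrow> 'l list \<Rightarrow> 'c list \<Rightarrow> bool" where
  "upath ends ls cs \<longleftrightarrow> length ls = Suc (length cs) \<and>
     (\<forall>k < length cs. ends (cs ! k) = Some (ls ! k, ls ! Suc k)
                     \<or> ends (cs ! k) = Some (ls ! Suc k, ls ! k))"

definition endpoint_locs :: "('c \<Rightarrow> ('l \<times> 'l) option) \<Rightarrow> 'c set \<Rightarrow> 'l set" where
  "endpoint_locs ends C = {l. \<exists>c\<in>C. \<exists>s r. ends c = Some (s, r) \<and> (l = s \<or> l = r)}"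

definition undirected_cut :: "('c \<Rightarrow> ('l \<times> 'l) option) \<Rightarrow> 'c set \<Rightarrow> 'c set \<Rightarrow> 'c set \<Rightarrow> bool" where
  "undirected_cut ends Ccut Cs Co \<longleftrightarrow>
     Cs \<inter> Ccut = {} \<and> Cs \<inter> Co = {} \<and> Ccut \<inter> Co = {} \<and>
     (\<forall>ls cs. upath ends ls cs \<and> hd ls \<in> endpoint_locs ends Co \<and> last ls \<in> endpoint_locs ends Cs
        \<longrightarrow> (\<exists>c\<in>set cs. c \<in> Ccut))"

end

theory Submission
  imports Defs
begin

text \<open>The inclusion from left to right is immediate: restrict one execution to Ccut and to
Cs. Conversely, let A1 be an execution with view Bo on Co and view Bc on Ccut, and A2 one with
view Bc on Ccut. Let K consist of Co and the channels outside Ccut touching a location reachable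
from Co without crossing Ccut. Because Ccut is a cut, K misses Cs, and every location sees either
only channels of K \<union> Ccut or no channel of K. Glue the events of A1 on K \<union> Ccut to the events
of A2 off K: they overlap exactly in the common cut events, where both orders agree, so the two
orders together with their compositions form a partial order restricting to each of them. Every
location then sees exactly what it sees in A1 or in A2, so the glued system is an execution with
view Bo on Co and the view of A2 on Cs.\<close>

lemma label_seq_cong:
  assumes "Restr R S = Restr R' S"
  shows "label_seq chan msg R S = label_seq chan msg R' S"
proof -
  have preds: "{e'\<in>S. (e', e) \<in> R \<and> e' \<noteq> e} = {e'\<in>S. (e', e) \<in> R' \<and> e' \<noteq> e}" if "e \<in> S" for e
    using assms that by blast
  then have "(\<lambda>e. e \<in> S \<and> card {e'\<in>S. (e', e) \<in> R \<and> e' \<noteq> e} = i)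
           = (\<lambda>e. e \<in> S \<and> card {e'\<in>S. (e', e) \<in> R' \<and> e' \<noteq> e} = i)" for i
    by (auto simp del: Collect_conj_eq)
  moreover have "(\<exists>e\<in>S. card {e'\<in>S. (e', e) \<in> R \<and> e' \<noteq> e} = i)
           = (\<exists>e\<in>S. card {e'\<in>S. (e', e) \<in> R' \<and> e' \<noteq> e} = i)" for i
    using preds by (metis (no_types, lifting))
  ultimately show ?thesis
    unfolding label_seq_def[abs_def] by presburger
qed

lemma exec_from_local_views:
  assumes "system_of_events (B, R)"
    and "\<And>l. \<exists>A\<in>exec ends traces chan msg. restr chan (chans ends l) (B, R) = restr chan (chans ends l) A"
  shows "(B, R) \<in> exec ends traces chan msg"
proof -
  have "(\<forall>e\<in>S. \<forall>e'\<in>S. (e, e') \<in> R \<or> (e', e) \<in> R) \<and> label_seq chan msg R S \<in> traces l"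
    if S: "S = {e\<in>B. chan e \<in> chans ends l}" for l S
  proof -
    obtain B' R' where exec': "(B', R') \<in> exec ends traces chan msg"
      and view: "restr chan (chans ends l) (B, R) = restr chan (chans ends l) (B', R')"
      using assms(2) by fast
    have S': "S = {e\<in>B'. chan e \<in> chans ends l}" and R': "Restr R S = Restr R' S"
      using view unfolding restr_def S by (simp_all add: Let_def, metis)
    have "(\<forall>e\<in>S. \<forall>e'\<in>S. (e, e') \<in> R' \<or> (e', e) \<in> R') \<and> label_seq chan msg R' S \<in> traces l"
      using exec' unfolding exec_def S' by (simp add: Let_def) blast
    moreover have "(e, e') \<in> R \<longleftrightarrow> (e, e') \<in> R'" if "e \<in> S" "e' \<in> S" for e e'
      using R' that by blast
    ultimately show ?thesis
      using label_seq_cong[OF R', of chan msg] by metis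
  qed
  from this[OF refl] show ?thesis
    using assms(1) unfolding exec_def by (simp add: Let_def) blast
qed

lemma system_of_events_finite_predecessors:
  assumes "system_of_events (B, R)"
  shows "finite {x. (x, y) \<in> R}"
proof (cases "y \<in> B")
  case False
  then have "{x. (x, y) \<in> R} = {}"
    using assms unfolding system_of_events_def by blast
  then show ?thesis by simp
qed (use assms in \<open>simp add: system_of_events_def\<close>)

lemma restr_eqI:
  assumes "{e\<in>B. chan e \<in> C} = {e\<in>B'. chan e \<in> C}" and "{e\<in>B. chan e \<in> C} \<subseteq> D"
    and "Restr R D = Restr R' D"
  shows "restr chan C (B, R) = restr chan C (B', R')"
proof -
  have "Restr R {e\<in>B. chan e \<in> C} = Restr R' {e\<in>B. chan e \<in> C}"
    using assms(2,3) by blast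
  then show ?thesis
    using assms(1) unfolding restr_def by (simp add: Let_def)
qed

locale order_gluing =
  fixes D1 D2 :: "'a set" and Q1 Q2 :: "'a rel"
  assumes field1: "Q1 \<subseteq> D1 \<times> D1" and field2: "Q2 \<subseteq> D2 \<times> D2"
    and trans1: "trans Q1" and trans2: "trans Q2"
    and agree: "Restr Q1 (D1 \<inter> D2) = Restr Q2 (D1 \<inter> D2)"
begin

definition glued :: "'a rel" where
  "glued = Q1 \<union> Q2 \<union> Q1 O Q2 \<union> Q2 O Q1"

lemma swapped: "order_gluing D2 D1 Q2 Q1"
  using field1 field2 trans1 trans2 agree by unfold_locales (auto simp: Int_commute)

lemma glued_swap: "order_gluing.glued Q2 Q1 = glued"
  unfolding order_gluing.glued_def[OF swapped] glued_def by blast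

lemma Restr_glued1: "Restr glued D1 = Q1"
proof -
  have Q2_in_Q1: "(x, y) \<in> Q1" if "(x, y) \<in> Q2" "x \<in> D1" "y \<in> D1" for x y
    using that field2 agree by blast
  have "(x, y) \<in> Q1" if "(x, y) \<in> glued" "x \<in> D1" "y \<in> D1" for x y
    using that field1 field2 Q2_in_Q1 trans1 unfolding glued_def trans_def by blast
  then show ?thesis
    using field1 unfolding glued_def by blast
qed

lemma Restr_glued2: "Restr glued D2 = Q2"
  using order_gluing.Restr_glued1[OF swapped] glued_swap by simp

lemma glued_field: "glued \<subseteq> (D1 \<union> D2) \<times> (D1 \<union> D2)"
  using field1 field2 unfolding glued_def by blast

lemma trans_glued: "trans glued"
proof (rule transI)
  have Q121: "(a, d) \<in> Q1" if "(a, b) \<in> Q1" "(b, c) \<in> Q2" "(c, d) \<in> Q1" for a b c d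
    using that Restr_glued1 trans1 field1 unfolding glued_def trans_def by blast
  have Q212: "(a, d) \<in> Q2" if "(a, b) \<in> Q2" "(b, c) \<in> Q1" "(c, d) \<in> Q2" for a b c d
    using that Restr_glued2 trans2 field2 unfolding glued_def trans_def by blast
  have glued_iff: "(x, z) \<in> glued \<longleftrightarrow> (x, z) \<in> Q1 \<or> (x, z) \<in> Q2
      \<or> (\<exists>b. (x, b) \<in> Q1 \<and> (b, z) \<in> Q2) \<or> (\<exists>b. (x, b) \<in> Q2 \<and> (b, z) \<in> Q1)" for x z
    unfolding glued_def by blast
  fix x y z assume "(x, y) \<in> glued" and "(y, z) \<in> glued"
  then show "(x, z) \<in> glued"
    unfolding glued_iff by (elim disjE exE conjE) (meson trans1 trans2 transD Q121 Q212)+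
qed

lemma glued_no_cycle_across:
  assumes "antisym Q1" and xy: "(x, y) \<in> glued" and yx: "(y, x) \<in> glued" and "x \<notin> D2" "y \<notin> D1"
  shows False
proof -
  obtain d where "(y, d) \<in> Q2" and dx: "(d, x) \<in> Q1"
    using yx \<open>x \<notin> D2\<close> \<open>y \<notin> D1\<close> field1 field2 unfolding glued_def by blast
  then have "(x, d) \<in> glued" and "d \<in> D2"
    using xy trans_glued field2 unfolding glued_def trans_def by blast+
  then have "(x, d) \<in> Q1"
    using dx field1 Restr_glued1 by blast
  then have "x = d"
    using dx \<open>antisym Q1\<close> antisymD by fastforce
  then show False
    using \<open>d \<in> D2\<close> \<open>x \<notin> D2\<close> by blast
qed

lemma antisym_glued:
  assumes "antisym Q1" and "antisym Q2"
  shows "antisym glued"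
proof (rule antisymI)
  fix x y assume xy: "(x, y) \<in> glued" and yx: "(y, x) \<in> glued"
  then have "x \<in> D1 \<and> y \<in> D1 \<or> x \<in> D2 \<and> y \<in> D2"
    using glued_no_cycle_across[OF \<open>antisym Q1\<close>] glued_field by blast
  then show "x = y"
  proof
    assume "x \<in> D1 \<and> y \<in> D1"
    then have "(x, y) \<in> Q1" "(y, x) \<in> Q1"
      using xy yx Restr_glued1 by blast+
    then show "x = y" using \<open>antisym Q1\<close> antisymD by metis
  next
    assume "x \<in> D2 \<and> y \<in> D2"
    then have "(x, y) \<in> Q2" "(y, x) \<in> Q2"
      using xy yx Restr_glued2 by blast+
    then show "x = y" using \<open>antisym Q2\<close> antisymD by metis
  qed
qed

lemma finite_glued_predecessors:
  assumes "\<And>y. finite {x. (x, y) \<in> Q1}" and "\<And>y. finite {x. (x, y) \<in> Q2}"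
  shows "finite {x. (x, y) \<in> glued}"
proof -
  have "{x. (x, y) \<in> glued} \<subseteq> {x. (x, y) \<in> Q1} \<union> {x. (x, y) \<in> Q2}
      \<union> (\<Union>b\<in>{b. (b, y) \<in> Q2}. {x. (x, b) \<in> Q1}) \<union> (\<Union>b\<in>{b. (b, y) \<in> Q1}. {x. (x, b) \<in> Q2})"
    unfolding glued_def by blast
  then show ?thesis
    using assms by (auto intro: finite_subset)
qed

end

lemma order_gluing_Restr:
  assumes "trans R1" and "trans R2" and "Restr R1 (D1 \<inter> D2) = Restr R2 (D1 \<inter> D2)"
  shows "order_gluing D1 D2 (Restr R1 D1) (Restr R2 D2)"
proof
  have "Restr (Restr R1 D1) (D1 \<inter> D2) = Restr R1 (D1 \<inter> D2)"
    and "Restr (Restr R2 D2) (D1 \<inter> D2) = Restr R2 (D1 \<inter> D2)"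
    by blast+
  then show "Restr (Restr R1 D1) (D1 \<inter> D2) = Restr (Restr R2 D2) (D1 \<inter> D2)"
    using assms(3) by simp
qed (use assms(1,2) in \<open>auto intro: trans_Restr\<close>)

lemma system_of_events_glued:
  assumes soe1: "system_of_events (B1, R1)" and soe2: "system_of_events (B2, R2)"
    and "D1 \<subseteq> B1" and "D2 \<subseteq> B2" and overlap: "Restr R1 (D1 \<inter> D2) = Restr R2 (D1 \<inter> D2)"
  shows "system_of_events (D1 \<union> D2, order_gluing.glued (Restr R1 D1) (Restr R2 D2))"
proof -
  interpret order_gluing D1 D2 "Restr R1 D1" "Restr R2 D2"
    using soe1 soe2 overlap by (intro order_gluing_Restr) (simp_all add: system_of_events_def)
  have "refl_on (D1 \<union> D2) glued"
  proof (rule refl_onI)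
    fix x assume "x \<in> D1 \<union> D2"
    then have "(x, x) \<in> Restr R1 D1 \<or> (x, x) \<in> Restr R2 D2"
      using soe1 soe2 \<open>D1 \<subseteq> B1\<close> \<open>D2 \<subseteq> B2\<close> unfolding system_of_events_def refl_on_def by auto
    then show "(x, x) \<in> glued"
      unfolding glued_def by blast
  qed
  moreover have "antisym glued"
  proof (rule antisym_glued)
    show "antisym (Restr R1 D1)" and "antisym (Restr R2 D2)"
      using soe1 soe2 unfolding system_of_events_def by (auto intro: antisym_subset)
  qed
  moreover have "finite {x. (x, y) \<in> glued}" for y
  proof (rule finite_glued_predecessors)
    show "finite {x. (x, y) \<in> Restr R1 D1}" for y
      using system_of_events_finite_predecessors[OF soe1, of y] by (rule finite_subset[rotated]) blast
    show "finite {x. (x, y) \<in> Restr R2 D2}" for y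
      using system_of_events_finite_predecessors[OF soe2, of y] by (rule finite_subset[rotated]) blast
  qed
  ultimately show ?thesis
    unfolding system_of_events_def using glued_field trans_glued by simp
qed

lemma exec_glue:
  assumes exec1: "(B1, R1) \<in> exec ends traces chan msg" and exec2: "(B2, R2) \<in> exec ends traces chan msg"
    and cut_view: "restr chan Ccut (B1, R1) = restr chan Ccut (B2, R2)"
    and "K \<inter> Ccut = {}"
    and local: "\<And>l. chans ends l \<subseteq> K \<union> Ccut \<or> chans ends l \<inter> K = {}"
  obtains A where "A \<in> exec ends traces chan msg"
    and "\<And>C. C \<subseteq> K \<union> Ccut \<Longrightarrow> restr chan C A = restr chan C (B1, R1)"
    and "\<And>C. C \<inter> K = {} \<Longrightarrow> restr chan C A = restr chan C (B2, R2)"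
proof -
  define D1 where "D1 = {e\<in>B1. chan e \<in> K \<union> Ccut}"
  define D2 where "D2 = {e\<in>B2. chan e \<notin> K}"
  have soe1: "system_of_events (B1, R1)" and soe2: "system_of_events (B2, R2)"
    using exec1 exec2 by (auto simp: exec_def)
  have cut_events: "{e\<in>B1. chan e \<in> Ccut} = {e\<in>B2. chan e \<in> Ccut}"
    and cut_order: "Restr R1 {e\<in>B1. chan e \<in> Ccut} = Restr R2 {e\<in>B2. chan e \<in> Ccut}"
    using cut_view unfolding restr_def by (simp_all add: Let_def, metis)
  have "D1 \<inter> D2 = {e\<in>B1. chan e \<in> Ccut}"
    using cut_events \<open>K \<inter> Ccut = {}\<close> unfolding D1_def D2_def by blast
  then have cut_agree: "Restr R1 (D1 \<inter> D2) = Restr R2 (D1 \<inter> D2)"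
    using cut_order cut_events by simp
  interpret order_gluing D1 D2 "Restr R1 D1" "Restr R2 D2"
    using soe1 soe2 cut_agree by (intro order_gluing_Restr) (simp_all add: system_of_events_def)
  have soe: "system_of_events (D1 \<union> D2, glued)"
    using system_of_events_glued[OF soe1 soe2 _ _ cut_agree] unfolding D1_def D2_def by blast
  have view1: "restr chan C (D1 \<union> D2, glued) = restr chan C (B1, R1)" if "C \<subseteq> K \<union> Ccut" for C
  proof (rule restr_eqI)
    show "{e\<in>D1 \<union> D2. chan e \<in> C} = {e\<in>B1. chan e \<in> C}" and "{e\<in>D1 \<union> D2. chan e \<in> C} \<subseteq> D1"
      using that cut_events unfolding D1_def D2_def by blast+
    show "Restr glued D1 = Restr R1 D1"
      using Restr_glued1 by blast
  qed
  have view2: "restr chan C (D1 \<union> D2, glued) = restr chan C (B2, R2)" if "C \<inter> K = {}" for C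
  proof (rule restr_eqI)
    show "{e\<in>D1 \<union> D2. chan e \<in> C} = {e\<in>B2. chan e \<in> C}" and "{e\<in>D1 \<union> D2. chan e \<in> C} \<subseteq> D2"
      using that cut_events unfolding D1_def D2_def by blast+
    show "Restr glued D2 = Restr R2 D2"
      using Restr_glued2 by blast
  qed
  have "(D1 \<union> D2, glued) \<in> exec ends traces chan msg"
  proof (rule exec_from_local_views[OF soe])
    show "\<exists>A\<in>exec ends traces chan msg. restr chan (chans ends l) (D1 \<union> D2, glued) = restr chan (chans ends l) A" for l
      using local[of l]
    proof
      assume "chans ends l \<subseteq> K \<union> Ccut"
      then show ?thesis using view1 exec1 by blast
    next
      assume "chans ends l \<inter> K = {}"
      then show ?thesis using view2 exec2 by blast
    qed
  qed
  with view1 view2 show ?thesis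
    using that by blast
qed

lemma upath_snoc:
  assumes "upath ends ls cs"
    and "ends c = Some (last ls, r) \<or> ends c = Some (r, last ls)"
  shows "upath ends (ls @ [r]) (cs @ [c])"
proof -
  have len: "length ls = Suc (length cs)"
    using assms(1) by (simp add: upath_def)
  then have "last ls = ls ! length cs"
    by (metis diff_Suc_1 last_conv_nth list.size(3) nat.distinct(1))
  then show ?thesis
    using assms len unfolding upath_def by (auto simp: nth_append less_Suc_eq)
qed

inductive_set reachable_avoiding :: "('c \<Rightarrow> ('l \<times> 'l) option) \<Rightarrow> 'c set \<Rightarrow> 'c set \<Rightarrow> 'l set"
  for ends Ccut Co
where
  start: "l \<in> endpoint_locs ends Co \<Longrightarrow> l \<in> reachable_avoiding ends Ccut Co"
| step: "\<lbrakk>l \<in> reachable_avoiding ends Ccut Co; c \<notin> Ccut; ends c = Some (l, r) \<or> ends c = Some (r, l)\<rbrakk>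
    \<Longrightarrow> r \<in> reachable_avoiding ends Ccut Co"

lemma reachable_avoiding_upath:
  assumes "l \<in> reachable_avoiding ends Ccut Co"
  shows "\<exists>ls cs. upath ends ls cs \<and> hd ls \<in> endpoint_locs ends Co \<and> last ls = l \<and> set cs \<inter> Ccut = {}"
  using assms
proof induction
  case (start l)
  have "upath ends [l] []"
    by (simp add: upath_def)
  with start show ?case by fastforce
next
  case (step l c r)
  then obtain ls cs where "upath ends ls cs" "hd ls \<in> endpoint_locs ends Co" "last ls = l" "set cs \<inter> Ccut = {}"
    by blast
  moreover have "ls \<noteq> []"
    using \<open>upath ends ls cs\<close> by (auto simp: upath_def)
  ultimately show ?case
    using step(2,3) upath_snoc[of ends ls cs c r] by (intro exI[of _ "ls @ [r]"] exI[of _ "cs @ [c]"]) auto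
qed

lemma undirected_cut_separating_channels:
  assumes cut: "undirected_cut ends Ccut Cs Co"
  obtains K where "Co \<subseteq> K" and "K \<inter> Ccut = {}" and "Cs \<inter> K = {}"
    and "\<And>l. chans ends l \<subseteq> K \<union> Ccut \<or> chans ends l \<inter> K = {}"
proof
  have disjoint: "Cs \<inter> Co = {}" "Ccut \<inter> Co = {}"
    and cuts: "\<And>ls cs. \<lbrakk>upath ends ls cs; hd ls \<in> endpoint_locs ends Co; last ls \<in> endpoint_locs ends Cs\<rbrakk>
      \<Longrightarrow> \<exists>c\<in>set cs. c \<in> Ccut"
    using cut unfolding undirected_cut_def by blast+
  let ?X = "reachable_avoiding ends Ccut Co"
  define K where "K = Co \<union> {c. c \<notin> Ccut \<and> (\<exists>s r. ends c = Some (s, r) \<and> s \<in> ?X)}"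
  have ends_reachable: "s \<in> ?X \<and> r \<in> ?X" if "c \<in> K" "ends c = Some (s, r)" for c s r
  proof (cases "c \<in> Co")
    case True
    then have "s \<in> endpoint_locs ends Co" "r \<in> endpoint_locs ends Co"
      using that(2) unfolding endpoint_locs_def by blast+
    then show ?thesis by (blast intro: reachable_avoiding.start)
  next
    case False
    then show ?thesis
      using that unfolding K_def by (auto intro: reachable_avoiding.step)
  qed
  show "Co \<subseteq> K"
    unfolding K_def by blast
  show "K \<inter> Ccut = {}"
    using disjoint unfolding K_def by blast
  show "Cs \<inter> K = {}"
  proof (rule ccontr)
    assume "Cs \<inter> K \<noteq> {}"
    then obtain c where "c \<in> Cs" "c \<in> K" "c \<notin> Co"
      using disjoint by blast
    then obtain s r where "ends c = Some (s, r)" and "s \<in> ?X"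
      unfolding K_def by blast
    obtain ls cs where "upath ends ls cs" "hd ls \<in> endpoint_locs ends Co" "last ls = s"
      and "set cs \<inter> Ccut = {}"
      using reachable_avoiding_upath[OF \<open>s \<in> ?X\<close>] by blast
    moreover have "s \<in> endpoint_locs ends Cs"
      using \<open>c \<in> Cs\<close> \<open>ends c = Some (s, r)\<close> unfolding endpoint_locs_def by auto
    ultimately show False
      using cuts by fastforce
  qed
  show "chans ends l \<subseteq> K \<union> Ccut \<or> chans ends l \<inter> K = {}" for l
  proof (cases "l \<in> ?X")
    case True
    have "c \<in> K" if c: "c \<in> chans ends l" "c \<notin> Ccut" for c
    proof -
      obtain s r where "ends c = Some (s, r)" and "s = l \<or> r = l"
        using c(1) unfolding chans_def by blast
      then have "s \<in> ?X"
        using True c(2) by (blast intro: reachable_avoiding.step)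
      then show ?thesis
        using \<open>ends c = Some (s, r)\<close> c(2) unfolding K_def by blast
    qed
    then show ?thesis by blast
  next
    case False
    have "c \<notin> K" if "c \<in> chans ends l" for c
      using that False ends_reachable unfolding chans_def by blast
    then show ?thesis by blast
  qed
qed

theorem lemma5:
  fixes ends :: "'c \<Rightarrow> ('l \<times> 'l) option"
    and traces :: "'l \<Rightarrow> ('c \<times> 'd) fiseq set"
    and chan :: "'e \<Rightarrow> 'c" and msg :: "'e \<Rightarrow> 'd"
    and Cs Ccut Co :: "'c set" and Bo :: "'e soe"
  assumes "frame ends traces"
    and "undirected_cut ends Ccut Cs Co"
    and "Bo \<in> lruns ends traces chan msg Co"
  shows "J ends traces chan msg Co Cs Bo =
         (\<Union>Bc \<in> J ends traces chan msg Co Ccut Bo. J ends traces chan msg Ccut Cs Bc)"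
proof
  obtain K where "Co \<subseteq> K" "K \<inter> Ccut = {}" "Cs \<inter> K = {}"
    and local: "\<And>l. chans ends l \<subseteq> K \<union> Ccut \<or> chans ends l \<inter> K = {}"
    using undirected_cut_separating_channels[OF assms(2)] by blast
  show "(\<Union>Bc \<in> J ends traces chan msg Co Ccut Bo. J ends traces chan msg Ccut Cs Bc)
      \<subseteq> J ends traces chan msg Co Cs Bo"
  proof
    fix B assume "B \<in> (\<Union>Bc \<in> J ends traces chan msg Co Ccut Bo. J ends traces chan msg Ccut Cs Bc)"
    then obtain B1 R1 B2 R2 where exec1: "(B1, R1) \<in> exec ends traces chan msg"
      and exec2: "(B2, R2) \<in> exec ends traces chan msg"
      and cut_view: "restr chan Ccut (B1, R1) = restr chan Ccut (B2, R2)"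
      and "restr chan Co (B1, R1) = Bo" and "B = restr chan Cs (B2, R2)"
      unfolding J_def by auto
    then obtain A where "A \<in> exec ends traces chan msg" "restr chan Co A = Bo" "restr chan Cs A = B"
      using exec_glue[OF exec1 exec2 cut_view \<open>K \<inter> Ccut = {}\<close> local] \<open>Co \<subseteq> K\<close> \<open>Cs \<inter> K = {}\<close>
      by (metis le_supI1)
    then show "B \<in> J ends traces chan msg Co Cs Bo"
      unfolding J_def by blast
  qed
qed (auto simp: J_def)

end
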